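(* Let $u$ and $v$ be non-adjacent vertices in a prime $\overline{P_5}$-free graph $G$. Then either $N(u)\cap N(v)$ is a clique, or there exist a vertex $w\in V(G)\setminus (N(u)\cup N(v)\cup\{u,v\})$ and a set $A\subseteq N(u)\cap N(v)$ such that $G[A]$ is anticonnected and $w$ is mixed on $A$.
   Context: All graphs are finite and simple. $N(x)$ is the set of neighbors of $x$. $P_5$ is the path on five vertices and $\overline{P_5}$ its complement; $G$ is $H$-free if it has no induced subgraph isomorphic to $H$. A graph is anticonnected if its complement is connected. A vertex $b\notin X$ is mixed on $X$ if it has both a neighbor and a non-neighbor in $X$. A homogeneous set is a set $X\subseteq V(G)$ with $1<|X|<|V(G)|$ such that no vertex outside $X$ is mixed on $X$. $G$ is prime if $|V(G)|\ge4$ and has no homogeneous set. *)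

theory Defs
  imports Main
begin

definition graph :: "'a set \<Rightarrow> ('a \<Rightarrow> 'a \<Rightarrow> bool) \<Rightarrow> bool" where
  "graph V E \<longleftrightarrow> finite V \<and> (\<forall>x y. E x y \<longrightarrow> E y x) \<and> (\<forall>x. \<not> E x x)
     \<and> (\<forall>x y. E x y \<longrightarrow> x \<in> V \<and> y \<in> V)"

definition nbhd :: "('a \<Rightarrow> 'a \<Rightarrow> bool) \<Rightarrow> 'a \<Rightarrow> 'a set" where
  "nbhd E x = {y. E x y}"

definition clique :: "('a \<Rightarrow> 'a \<Rightarrow> bool) \<Rightarrow> 'a set \<Rightarrow> bool" where
  "clique E X \<longleftrightarrow> (\<forall>x\<in>X. \<forall>y\<in>X. x \<noteq> y \<longrightarrow> E x y)"

definition has_induced :: "'a set \<Rightarrow> ('a \<Rightarrow> 'a \<Rightarrow> bool) \<Rightarrow> 'b set \<Rightarrow> ('b \<Rightarrow> 'b \<Rightarrow> bool) \<Rightarrow> bool" where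
  "has_induced V E W F \<longleftrightarrow> (\<exists>f. inj_on f W \<and> f ` W \<subseteq> V \<and>
      (\<forall>x\<in>W. \<forall>y\<in>W. E (f x) (f y) \<longleftrightarrow> F x y))"

definition P5_adj :: "nat \<Rightarrow> nat \<Rightarrow> bool" where
  "P5_adj i j \<longleftrightarrow> i < 5 \<and> j < 5 \<and> (i = j + 1 \<or> j = i + 1)"

definition coP5_adj :: "nat \<Rightarrow> nat \<Rightarrow> bool" where
  "coP5_adj i j \<longleftrightarrow> i < 5 \<and> j < 5 \<and> i \<noteq> j \<and> \<not> P5_adj i j"

definition coP5_free :: "'a set \<Rightarrow> ('a \<Rightarrow> 'a \<Rightarrow> bool) \<Rightarrow> bool" where
  "coP5_free V E \<longleftrightarrow> \<not> has_induced V E {0..<5::nat} coP5_adj"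

definition mixed :: "('a \<Rightarrow> 'a \<Rightarrow> bool) \<Rightarrow> 'a \<Rightarrow> 'a set \<Rightarrow> bool" where
  "mixed E b X \<longleftrightarrow> b \<notin> X \<and> (\<exists>x\<in>X. E b x) \<and> (\<exists>x\<in>X. \<not> E b x)"

definition homogeneous :: "'a set \<Rightarrow> ('a \<Rightarrow> 'a \<Rightarrow> bool) \<Rightarrow> 'a set \<Rightarrow> bool" where
  "homogeneous V E X \<longleftrightarrow> X \<subseteq> V \<and> 1 < card X \<and> card X < card V \<and>
     (\<forall>b\<in>V - X. \<not> mixed E b X)"

definition prime_graph :: "'a set \<Rightarrow> ('a \<Rightarrow> 'a \<Rightarrow> bool) \<Rightarrow> bool" where
  "prime_graph V E \<longleftrightarrow> card V \<ge> 4 \<and> (\<nexists>X. homogeneous V E X)"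

definition connected_on :: "('a \<Rightarrow> 'a \<Rightarrow> bool) \<Rightarrow> 'a set \<Rightarrow> bool" where
  "connected_on E X \<longleftrightarrow> X \<noteq> {} \<and>
     (\<forall>x\<in>X. \<forall>y\<in>X. (x, y) \<in> ({(a, b). a \<in> X \<and> b \<in> X \<and> E a b})\<^sup>*)"

definition anticonnected :: "('a \<Rightarrow> 'a \<Rightarrow> bool) \<Rightarrow> 'a set \<Rightarrow> bool" where
  "anticonnected E X \<longleftrightarrow> connected_on (\<lambda>a b. a \<noteq> b \<and> \<not> E a b) X"

end

theory Submission
  imports Defs
begin

text \<open>Let C = N(u) \<inter> N(v) contain a non-edge xy and let A be the anticomponent of C containing
  x and y. As G is prime, some z \<notin> A is mixed on A; maximality of A forces z \<notin> C, and
  anticonnectivity of A yields a non-edge ab in A with z adjacent to a but not to b. If z were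
  adjacent to exactly one of u, v, then u, v, z, b, a would induce a co-P5, so z is adjacent to
  neither.\<close>

lemma graph_sym: "graph V E \<Longrightarrow> E x y \<Longrightarrow> E y x"
  unfolding graph_def by blast

lemma graph_irrefl: "graph V E \<Longrightarrow> \<not> E x x"
  unfolding graph_def by blast

lemma graph_edge_in_vertices: "graph V E \<Longrightarrow> E x y \<Longrightarrow> x \<in> V \<and> y \<in> V"
  unfolding graph_def by blast

text \<open>The four non-edges form the induced path u v z b a, whose complement is the co-P5.\<close>

lemma has_induced_coP5:
  assumes g: "graph V E"
    and V: "u \<in> V" "v \<in> V" "z \<in> V" "b \<in> V" "a \<in> V"
    and distinct: "distinct [u, v, z, b, a]"
    and edges: "E u z" "E u b" "E u a" "E v b" "E v a" "E z a"
    and non_edges: "\<not> E u v" "\<not> E v z" "\<not> E z b" "\<not> E b a"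
  shows "has_induced V E {0..<5::nat} coP5_adj"
  unfolding has_induced_def
proof (intro exI conjI)
  define f where "f = (\<lambda>i::nat. if i = 0 then u else if i = 1 then v else if i = 2 then z
      else if i = 3 then b else a)"
  have five: "{0..<5::nat} = {0, 1, 2, 3, 4}" by auto
  show "inj_on f {0..<5}" using distinct unfolding five inj_on_def f_def by auto
  show "f ` {0..<5} \<subseteq> V" using V unfolding five f_def by auto
  have "E x y \<longleftrightarrow> E y x" for x y using graph_sym[OF g] by blast
  then show "\<forall>i\<in>{0..<5}. \<forall>j\<in>{0..<5}. E (f i) (f j) = coP5_adj i j"
    unfolding five f_def coP5_adj_def P5_adj_def
    using edges non_edges graph_irrefl[OF g] by auto
qed

lemma coP5_free_common_antineighbours:
  assumes g: "graph V E" and free: "coP5_free V E"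
    and "\<not> E u v" and "u \<noteq> v"
    and common: "E u a" "E v a" "E u b" "E v b"
    and "\<not> E a b" and "a \<noteq> b"
    and z: "z \<in> V" "E z a" "\<not> E z b"
  shows "E u z \<longleftrightarrow> E v z"
proof -
  have no_coP5: False
    if "E x z" "\<not> E y z" "\<not> E x y" "x \<noteq> y" "E x a" "E y a" "E x b" "E y b" for x y
  proof -
    have "x \<noteq> z" "y \<noteq> z" using that z by auto
    moreover have "x \<noteq> a" "x \<noteq> b" "y \<noteq> a" "y \<noteq> b"
      using that graph_irrefl[OF g] by auto
    moreover have "z \<noteq> a" "z \<noteq> b"
      using z graph_irrefl[OF g] graph_sym[OF g] \<open>\<not> E a b\<close> by blast+
    moreover have "x \<in> V" "y \<in> V" "a \<in> V" "b \<in> V"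
      using that graph_edge_in_vertices[OF g] by blast+
    moreover have "\<not> E b a" using \<open>\<not> E a b\<close> graph_sym[OF g] by blast
    ultimately have "has_induced V E {0..<5::nat} coP5_adj"
      using that z \<open>a \<noteq> b\<close> by (intro has_induced_coP5[OF g]) simp_all
    then show False using free unfolding coP5_free_def by blast
  qed
  show ?thesis
    using no_coP5[of u v] no_coP5[of v u] assms graph_sym[OF g] by blast
qed

definition antiedges :: "('a \<Rightarrow> 'a \<Rightarrow> bool) \<Rightarrow> 'a set \<Rightarrow> ('a \<times> 'a) set" where
  "antiedges E X = {(a, b). a \<in> X \<and> b \<in> X \<and> a \<noteq> b \<and> \<not> E a b}"

definition anticomponent :: "('a \<Rightarrow> 'a \<Rightarrow> bool) \<Rightarrow> 'a set \<Rightarrow> 'a \<Rightarrow> 'a set" where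
  "anticomponent E X x = {y. (x, y) \<in> (antiedges E X)\<^sup>*}"

lemma anticonnected_iff:
  "anticonnected E X \<longleftrightarrow> X \<noteq> {} \<and> (\<forall>x\<in>X. \<forall>y\<in>X. (x, y) \<in> (antiedges E X)\<^sup>*)"
  unfolding anticonnected_def connected_on_def antiedges_def by simp

lemma sym_antiedges: "(\<And>x y. E x y \<Longrightarrow> E y x) \<Longrightarrow> sym (antiedges E X)"
  unfolding sym_def antiedges_def by blast

lemma anticomponent_self: "x \<in> anticomponent E X x"
  unfolding anticomponent_def by simp

lemma anticomponent_subset:
  assumes "x \<in> X" shows "anticomponent E X x \<subseteq> X"
proof
  fix y assume "y \<in> anticomponent E X x"
  then have "(x, y) \<in> (antiedges E X)\<^sup>*" unfolding anticomponent_def by simp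
  then show "y \<in> X" using assms by (induction rule: rtrancl_induct) (auto simp: antiedges_def)
qed

lemma antiedge_in_anticomponent:
  "x \<in> X \<Longrightarrow> y \<in> X \<Longrightarrow> x \<noteq> y \<Longrightarrow> \<not> E x y \<Longrightarrow> y \<in> anticomponent E X x"
  unfolding anticomponent_def antiedges_def by auto

lemma card_anticomponent_gt_1:
  assumes "finite X" "x \<in> X" "y \<in> X" "x \<noteq> y" "\<not> E x y"
  shows "1 < card (anticomponent E X x)"
proof -
  have "{x, y} \<subseteq> anticomponent E X x"
    using anticomponent_self antiedge_in_anticomponent[of x X y E, OF assms(2-5)] by simp
  moreover have "finite (anticomponent E X x)"
    using assms(1) anticomponent_subset[OF assms(2)] by (rule finite_subset[rotated])
  ultimately show ?thesis using assms(4) card_mono[of _ "{x, y}"] by fastforce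
qed

lemma adjacent_to_anticomponent:
  assumes "x \<in> X" "c \<in> X" "c \<notin> anticomponent E X x" "a \<in> anticomponent E X x"
  shows "E a c"
proof (rule ccontr)
  assume "\<not> E a c"
  moreover have "a \<in> X" using anticomponent_subset[OF assms(1)] assms(4) by (rule subsetD)
  moreover have "a \<noteq> c" using assms(3,4) by metis
  ultimately have "(a, c) \<in> antiedges E X" using assms(2) unfolding antiedges_def by simp
  with assms(4) have "c \<in> anticomponent E X x"
    unfolding anticomponent_def by (simp add: rtrancl_into_rtrancl)
  with assms(3) show False by contradiction
qed

lemma rtrancl_antiedges_anticomponent:
  assumes "(x, y) \<in> (antiedges E X)\<^sup>*"
  shows "(x, y) \<in> (antiedges E (anticomponent E X x))\<^sup>*"
  using assms
proof (induction rule: rtrancl_induct)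
  case (step y z)
  then have "y \<in> anticomponent E X x" "z \<in> anticomponent E X x"
    unfolding anticomponent_def by (auto intro: rtrancl_into_rtrancl)
  with step.hyps(2) have "(y, z) \<in> antiedges E (anticomponent E X x)"
    unfolding antiedges_def by blast
  with step.IH show ?case by (rule rtrancl_into_rtrancl)
qed simp

lemma anticonnected_anticomponent:
  assumes "\<And>a b. E a b \<Longrightarrow> E b a"
  shows "anticonnected E (anticomponent E X x)"
  unfolding anticonnected_iff
proof (intro conjI ballI)
  show "anticomponent E X x \<noteq> {}" using anticomponent_self by (metis empty_iff)
  let ?R = "(antiedges E (anticomponent E X x))\<^sup>*"
  fix p q assume "p \<in> anticomponent E X x" "q \<in> anticomponent E X x"
  then have "(x, p) \<in> (antiedges E X)\<^sup>*" "(x, q) \<in> (antiedges E X)\<^sup>*"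
    unfolding anticomponent_def by simp_all
  then have "(x, p) \<in> ?R" "(x, q) \<in> ?R"
    by (simp_all add: rtrancl_antiedges_anticomponent)
  moreover have "sym ?R" using sym_antiedges[OF assms] by (rule sym_rtrancl)
  ultimately have "(p, x) \<in> ?R" "(x, q) \<in> ?R" by (simp_all add: symD)
  then show "(p, q) \<in> ?R" by (rule rtrancl_trans)
qed

lemma rtrancl_crossing_step:
  assumes "(p, q) \<in> R\<^sup>*" "P p" "\<not> P q"
  shows "\<exists>a b. (a, b) \<in> R \<and> P a \<and> \<not> P b"
  using assms
proof (induction rule: rtrancl_induct)
  case (step y q)
  then show ?case by (cases "P y") auto
qed simp

lemma anticonnected_mixed_antiedge:
  assumes "anticonnected E A" "mixed E z A"
  obtains a b where "(a, b) \<in> antiedges E A" "E z a" "\<not> E z b"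
proof -
  obtain p q where "p \<in> A" "q \<in> A" "E z p" "\<not> E z q"
    using assms(2) unfolding mixed_def by blast
  moreover from calculation have "(p, q) \<in> (antiedges E A)\<^sup>*"
    using assms(1) unfolding anticonnected_iff by simp
  ultimately show thesis using rtrancl_crossing_step[of p q _ "E z"] that by blast
qed

lemma mixed_on_anticomponent_outside:
  assumes "\<And>a b. E a b \<Longrightarrow> E b a" "x \<in> X" "mixed E z (anticomponent E X x)"
  shows "z \<notin> X"
proof
  assume "z \<in> X"
  have "E a z" if "a \<in> anticomponent E X x" for a
    using adjacent_to_anticomponent[OF assms(2) \<open>z \<in> X\<close>] assms(3) that
    unfolding mixed_def by blast
  with assms(1,3) show False unfolding mixed_def by blast
qed

lemma prime_graph_mixed_vertex:
  assumes "prime_graph V E" "finite V" "A \<subset> V" "1 < card A"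
  obtains z where "z \<in> V - A" "mixed E z A"
proof -
  have "card A < card V" using assms(2,3) by (rule psubset_card_mono)
  then show thesis using assms that unfolding prime_graph_def homogeneous_def by blast
qed

theorem lemma2p8:
  fixes V :: "'a set" and E :: "'a \<Rightarrow> 'a \<Rightarrow> bool" and u v :: 'a
  assumes "graph V E" and "prime_graph V E" and "coP5_free V E"
    and "u \<in> V" and "v \<in> V" and "u \<noteq> v" and "\<not> E u v"
  shows "clique E (nbhd E u \<inter> nbhd E v) \<or>
    (\<exists>w A. w \<in> V - (nbhd E u \<union> nbhd E v \<union> {u, v}) \<and>
       A \<subseteq> nbhd E u \<inter> nbhd E v \<and> anticonnected E A \<and> mixed E w A)"
proof (cases "clique E (nbhd E u \<inter> nbhd E v)")
  case False
  define C where "C = nbhd E u \<inter> nbhd E v"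
  obtain x y where xy: "x \<in> C" "y \<in> C" "x \<noteq> y" "\<not> E x y"
    using False unfolding clique_def C_def by blast
  define A where "A = anticomponent E C x"
  have "finite V" using assms(1) unfolding graph_def by simp
  have "A \<subseteq> C" unfolding A_def using xy(1) by (rule anticomponent_subset)
  moreover have "C \<subseteq> V" "u \<notin> C"
    unfolding C_def nbhd_def using graph_edge_in_vertices[OF assms(1)] graph_irrefl[OF assms(1)]
    by blast+
  ultimately have "A \<subset> V" using \<open>u \<in> V\<close> by blast
  have "1 < card A"
    unfolding A_def using finite_subset[OF \<open>C \<subseteq> V\<close> \<open>finite V\<close>] xy
    by (rule card_anticomponent_gt_1)
  with assms(2) \<open>finite V\<close> \<open>A \<subset> V\<close> obtain z where z: "z \<in> V - A" "mixed E z A"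
    by (rule prime_graph_mixed_vertex)
  have "z \<notin> C"
    using graph_sym[OF assms(1)] xy(1) z(2) unfolding A_def by (rule mixed_on_anticomponent_outside)
  have anti: "anticonnected E A"
    unfolding A_def by (rule anticonnected_anticomponent) (rule graph_sym[OF assms(1)])
  then obtain a b where ab: "(a, b) \<in> antiedges E A" "E z a" "\<not> E z b"
    using z(2) by (rule anticonnected_mixed_antiedge)
  have "a \<in> C" "b \<in> C" "\<not> E a b" "a \<noteq> b"
    using ab(1) \<open>A \<subseteq> C\<close> unfolding antiedges_def by auto
  then have common: "E u a" "E v a" "E u b" "E v b" "\<not> E a b" "a \<noteq> b"
    unfolding C_def nbhd_def by simp_all
  have "E u z \<longleftrightarrow> E v z"
    using coP5_free_common_antineighbours[OF assms(1,3,7,6) common DiffD1[OF z(1)] ab(2,3)] .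
  moreover have "z \<noteq> u" "z \<noteq> v" using common(3,4) ab(3) by auto
  ultimately have "z \<in> V - (nbhd E u \<union> nbhd E v \<union> {u, v})"
    using \<open>z \<notin> C\<close> z(1) unfolding C_def nbhd_def by auto
  then show ?thesis using \<open>A \<subseteq> C\<close> anti z(2) unfolding C_def by blast
qed simp

end
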